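(* The power series $\mathcal{E}_1(x)=\sum_{n=1}^{\infty}e(n)x^n$ is a $2$-regular power series, and it is transcendental over $\mathbb{Q}(x)$.
   Context: The Stern polynomials $B_n(t)\in\mathbb{Z}[t]$ are defined by $B_0(t)=0$, $B_1(t)=1$, and for $n\geq 1$: $B_{2n}(t)=tB_n(t)$, $B_{2n+1}(t)=B_n(t)+B_{n+1}(t)$. For $n\geq1$ let $e(n)=\deg B_n(t)$. A power series $\sum_n a_nx^n$ with coefficients in a field is $k$-regular (in the sense of Allouche–Shallit) if the $\mathbb{Q}$-vector space (over the relevant field) spanned by the subsequences $(a_{k^{j}n+r})_{n\ge0}$, $j\ge0$, $0\le r<k^j$, is finite-dimensional. *)

theory Defs
  imports "HOL-Computational_Algebra.Computational_Algebra"
begin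

function stern_poly :: "nat \<Rightarrow> int poly" where
  "stern_poly n =
     (if n = 0 then 0
      else if n = 1 then 1
      else if even n then [:0, 1:] * stern_poly (n div 2)
      else stern_poly (n div 2) + stern_poly (n div 2 + 1))"
  by auto
termination
  by (relation "measure id") (auto elim!: oddE)

declare stern_poly.simps [simp del]

definition stern_deg :: "nat \<Rightarrow> nat" where
  "stern_deg n = degree (stern_poly n)"

definition E1 :: "rat fps" where
  "E1 = Abs_fps (\<lambda>n. if n = 0 then 0 else of_nat (stern_deg n))"

definition k_kernel :: "nat \<Rightarrow> (nat \<Rightarrow> 'a) \<Rightarrow> (nat \<Rightarrow> 'a) set" where
  "k_kernel k a = {(\<lambda>n. a (k ^ j * n + r)) | j r. r < k ^ j}"

text \<open>k-regular (Allouche--Shallit): the span (over the coefficient field) of the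
  k-kernel is finite-dimensional, i.e. contained in the span of finitely many sequences.\<close>
definition k_regular :: "nat \<Rightarrow> (nat \<Rightarrow> 'a::field) \<Rightarrow> bool" where
  "k_regular k a \<longleftrightarrow>
     (\<exists>B :: (nat \<Rightarrow> 'a) set. finite B \<and>
        (\<forall>f \<in> k_kernel k a. \<exists>c :: (nat \<Rightarrow> 'a) \<Rightarrow> 'a. f = (\<lambda>n. \<Sum>b\<in>B. c b * b n)))"

definition k_regular_fps :: "nat \<Rightarrow> 'a::field fps \<Rightarrow> bool" where
  "k_regular_fps k f \<longleftrightarrow> k_regular k (fps_nth f)"

text \<open>Algebraic over Q(x): root of a nonzero polynomial with coefficients in Q(x);
  after clearing denominators, coefficients in Q[x].\<close>
definition fps_algebraic_ratfun :: "rat fps \<Rightarrow> bool" where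
  "fps_algebraic_ratfun f \<longleftrightarrow>
     (\<exists>P :: rat poly poly. P \<noteq> 0 \<and> poly (map_poly fps_of_poly P) f = 0)"

end

theory Submission
  imports Defs "HOL-Analysis.Analysis" "HOL-Real_Asymp.Real_Asymp"
begin

text \<open>
  1. Since all \<open>B\<^sub>n\<close> have positive leading coefficients, no cancellation occurs and
     \<open>e(2n) = e(n) + 1\<close>, \<open>e(2n+1) = max (e(n)) (e(n+1))\<close>.  From this we get
     \<open>e(4m+1) = e(m) + 1\<close>, \<open>e(4m+3) = e(m+1) + 1\<close> and the logarithmic bounds
     \<open>2 ^ e(n) \<le> n < 2 \<cdot> 4 ^ e(n)\<close>.

  2. 2-regularity: a sequence is \<open>k\<close>-regular as soon as it lies in a finite set \<open>B\<close> of
     sequences whose span is closed under the decimations \<open>f \<mapsto> f(k n + q)\<close>.  For \<open>e\<close>,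
     the set \<open>{e(n), e(n+1), e(2n+1), 1, [n = 0]}\<close> works by the recurrences above.

  3. Transcendence: for a sequence \<open>c\<close> of natural numbers with \<open>2 ^ c(n) \<le> n + 1\<close> and
     \<open>c(n) \<rightarrow> \<infinity>\<close>, the function \<open>g(s) = s \<cdot> \<Sum>\<^sub>n c(n) (1-s)\<^sup>n\<close> tends to \<open>\<infinity>\<close> as
     \<open>s \<rightarrow> 0\<^sup>+\<close> but only like \<open>log (1/s)\<close>, so \<open>s \<cdot> g(s)\<^sup>j \<rightarrow> 0\<close>.  Such a function
     satisfies no nontrivial relation \<open>\<Sum>\<^sub>i r\<^sub>i(s) g(s)\<^sup>i = 0\<close> with polynomial \<open>r\<^sub>i\<close>:
     after dividing out common powers of \<open>s\<close>, the highest power of \<open>g\<close> whose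
     coefficient does not vanish at \<open>0\<close> dominates.  An algebraic relation for
     the power series, evaluated at \<open>x = 1 - s\<close> and multiplied by \<open>s\<^sup>D\<close>, would be
     such a relation.
\<close>

section \<open>Degrees of Stern polynomials\<close>

lemma stern_poly_0 [simp]: "stern_poly 0 = 0"
  by (subst stern_poly.simps) simp

lemma stern_poly_1 [simp]: "stern_poly (Suc 0) = 1"
  by (subst stern_poly.simps) simp

lemma stern_poly_even: "n \<ge> 1 \<Longrightarrow> stern_poly (2 * n) = [:0, 1:] * stern_poly n"
  by (subst stern_poly.simps) auto

lemma stern_poly_odd: "n \<ge> 1 \<Longrightarrow> stern_poly (2 * n + 1) = stern_poly n + stern_poly (n + 1)"
  by (subst stern_poly.simps) auto

lemma degree_add_pos_lead_coeff:
  fixes p q :: "'a::linordered_idom poly"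
  assumes p: "lead_coeff p > 0" and q: "lead_coeff q > 0"
  shows "degree (p + q) = max (degree p) (degree q) \<and> lead_coeff (p + q) > 0"
proof (cases "degree p" "degree q" rule: linorder_cases)
  case less
  then show ?thesis using q by (simp add: degree_add_eq_right coeff_eq_0)
next
  case equal
  have "coeff (p + q) (degree p) = lead_coeff p + lead_coeff q"
    using equal by simp
  moreover from this have "degree (p + q) = degree p"
    using p q equal degree_add_le[of p "degree p" q] le_degree[of "p + q" "degree p"]
    by (auto intro: antisym)
  ultimately show ?thesis using p q equal by simp
next
  case greater
  then show ?thesis using p by (simp add: degree_add_eq_left coeff_eq_0)
qed

lemma binary_cases [case_names one even odd]:
  fixes n :: nat
  assumes "n \<ge> 1"
  obtains "n = 1"
    | (even) m where "n = 2 * m" "m \<ge> 1" "m < n"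
    | (odd) m where "n = 2 * m + 1" "m \<ge> 1" "m + 1 < n"
proof (cases "even n")
  case True
  then show ?thesis using assms that(2) by (auto elim!: evenE)
next
  case False
  then obtain m where "n = 2 * m + 1" by (auto elim!: oddE)
  then show ?thesis using that(1,3) by (cases "m = 0") auto
qed

lemma stern_poly_lead_coeff_pos: "n \<ge> 1 \<Longrightarrow> lead_coeff (stern_poly n) > 0"
proof (induction n rule: less_induct)
  case (less n)
  from less.prems show ?case
  proof (cases rule: binary_cases)
    case (even m)
    then have "lead_coeff (stern_poly m) > 0" using less.IH by simp
    then show ?thesis using even
      by (cases "stern_poly m = 0") (simp_all add: stern_poly_even lead_coeff_mult)
  next
    case (odd m)
    then have "lead_coeff (stern_poly m) > 0" "lead_coeff (stern_poly (m + 1)) > 0"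
      using less.IH by simp_all
    then have "lead_coeff (stern_poly m + stern_poly (m + 1)) > 0"
      by (rule conjunct2[OF degree_add_pos_lead_coeff])
    moreover have "stern_poly n = stern_poly m + stern_poly (m + 1)"
      using odd stern_poly_odd by simp
    ultimately show ?thesis by simp
  qed simp
qed

lemma stern_poly_nonzero: "n \<ge> 1 \<Longrightarrow> stern_poly n \<noteq> 0"
  using stern_poly_lead_coeff_pos[of n] by auto

lemma stern_deg_0 [simp]: "stern_deg 0 = 0"
  and stern_deg_1 [simp]: "stern_deg (Suc 0) = 0"
  by (simp_all add: stern_deg_def)

text \<open>The recursion for \<open>e(n)\<close>; the odd case uses that no cancellation occurs.\<close>
lemma stern_deg_even: "n \<ge> 1 \<Longrightarrow> stern_deg (2 * n) = stern_deg n + 1"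
  unfolding stern_deg_def using stern_poly_nonzero[of n]
  by (simp add: stern_poly_even degree_mult_eq)

lemma stern_deg_odd: "n \<ge> 1 \<Longrightarrow> stern_deg (2 * n + 1) = max (stern_deg n) (stern_deg (n + 1))"
  unfolding stern_deg_def
  using degree_add_pos_lead_coeff[OF stern_poly_lead_coeff_pos[of n] stern_poly_lead_coeff_pos[of "n + 1"]]
  by (subst stern_poly_odd) auto

lemma stern_deg_2 [simp]: "stern_deg 2 = 1" "stern_deg (Suc (Suc 0)) = 1"
  using stern_deg_even[of 1] by (simp_all add: numeral_2_eq_2)

lemma stern_deg_step:
  "n \<ge> 1 \<Longrightarrow> stern_deg (n + 1) \<le> stern_deg n + 1 \<and> stern_deg n \<le> stern_deg (n + 1) + 1"
proof (induction n rule: less_induct)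
  case (less n)
  from less.prems show ?case
  proof (cases rule: binary_cases)
    case one
    then show ?thesis using stern_deg_even[of 1] by simp
  next
    case (even m)
    then show ?thesis using less.IH[of m] stern_deg_even[of m] stern_deg_odd[of m] by auto
  next
    case (odd m)
    then show ?thesis using less.IH[of m] stern_deg_even[of "m + 1"] stern_deg_odd[of m]
      by (auto simp: algebra_simps)
  qed
qed

text \<open>Two-step recursions; they close up the 2-kernel and drive the growth bounds.\<close>
lemma stern_deg_4m1: "m \<ge> 1 \<Longrightarrow> stern_deg (4 * m + 1) = stern_deg m + 1"
  using stern_deg_odd[of "2 * m"] stern_deg_even[of m] stern_deg_odd[of m] stern_deg_step[of m]
  by (simp add: algebra_simps)

lemma stern_deg_4m3: "stern_deg (4 * m + 3) = stern_deg (m + 1) + 1"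
proof (cases "m = 0")
  case True
  then show ?thesis using stern_deg_odd[of 1] stern_deg_even[of 1] by simp
next
  case False
  then have "stern_deg (4 * m + 3) = max (stern_deg (2 * m + 1)) (stern_deg (2 * (m + 1)))"
    using stern_deg_odd[of "2 * m + 1"] by (simp add: algebra_simps numeral_eq_Suc)
  then show ?thesis using False stern_deg_even[of "m + 1"] stern_deg_odd[of m] stern_deg_step[of m]
    by simp
qed

lemma quaternary_cases [case_names even one_mod_4 three_mod_4]:
  fixes n :: nat
  assumes "n \<ge> 2"
  obtains (even) m where "n = 2 * m" "m \<ge> 1" "m < n"
    | (one_mod_4) m where "n = 4 * m + 1" "m \<ge> 1" "m < n"
    | (three_mod_4) m where "n = 4 * m + 3" "m + 1 < n"
proof -
  have "n mod 2 = 0 \<or> n mod 4 = 1 \<or> n mod 4 = 3" by presburger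
  then show ?thesis
  proof (elim disjE)
    assume "n mod 2 = 0"
    then have "n = 2 * (n div 2)" "n div 2 \<ge> 1" "n div 2 < n" using assms by auto
    then show ?thesis by (rule even)
  next
    assume "n mod 4 = 1"
    then have "n = 4 * (n div 4) + 1" "n div 4 \<ge> 1" "n div 4 < n" using assms by presburger+
    then show ?thesis by (rule one_mod_4)
  next
    assume "n mod 4 = 3"
    then have "n = 4 * (n div 4) + 3" "n div 4 + 1 < n" by presburger+
    then show ?thesis by (rule three_mod_4)
  qed
qed

lemma stern_deg_bounds: "n \<ge> 1 \<Longrightarrow> 2 ^ stern_deg n \<le> n \<and> n + 1 \<le> 2 * 4 ^ stern_deg n"
proof (induction n rule: less_induct)
  case (less n)
  show ?case
  proof (cases "n = 1")
    case False
    with less.prems have "n \<ge> 2" by simp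
    then show ?thesis
    proof (cases rule: quaternary_cases)
      case (even m)
      then show ?thesis using less.IH[of m] stern_deg_even[of m] by auto
    next
      case (one_mod_4 m)
      then show ?thesis using less.IH[of m] stern_deg_4m1[of m] by auto
    next
      case (three_mod_4 m)
      then show ?thesis using less.IH[of "m + 1"] stern_deg_4m3[of m] by auto
    qed
  qed simp
qed

lemma stern_deg_exp_le: "2 ^ stern_deg n \<le> n + 1"
  using stern_deg_bounds[of n] by (cases "n = 0") auto

lemma stern_deg_tendsto_infinity: "filterlim stern_deg at_top sequentially"
  unfolding filterlim_at_top eventually_sequentially
proof (intro allI exI impI)
  fix M n :: nat
  assume n: "n \<ge> 2 * 4 ^ M"
  show "M \<le> stern_deg n"
  proof (rule ccontr)
    assume "\<not> M \<le> stern_deg n"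
    then have "(4::nat) ^ stern_deg n < 4 ^ M" by (intro power_strict_increasing) auto
    moreover have "n + 1 \<le> 2 * 4 ^ stern_deg n"
      using stern_deg_bounds[of n] order_trans[OF _ n, of 1] by simp
    ultimately show False using n by linarith
  qed
qed

section \<open>2-regularity\<close>

definition seq_span :: "(nat \<Rightarrow> 'a::field) set \<Rightarrow> (nat \<Rightarrow> 'a) set" where
  "seq_span B = {f. \<exists>c. f = (\<lambda>n. \<Sum>b\<in>B. c b * b n)}"

lemma k_regular_iff_seq_span:
  "k_regular k a \<longleftrightarrow> (\<exists>B. finite B \<and> k_kernel k a \<subseteq> seq_span B)"
  unfolding k_regular_def seq_span_def by blast

lemma seq_span_base:
  assumes "finite B" "b \<in> B"
  shows "b \<in> seq_span B"
proof -
  have "(\<Sum>b'\<in>B. (if b' = b then 1 else 0) * b' n) = (\<Sum>b'\<in>B. if b' = b then b' n else 0)" for n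
    by (intro sum.cong) auto
  also have "\<dots> n = b n" for n using assms by simp
  finally show ?thesis unfolding seq_span_def by (intro CollectI exI ext) (rule sym)
qed

lemma seq_span_add:
  assumes "f \<in> seq_span B" "g \<in> seq_span B"
  shows "(\<lambda>n. f n + g n) \<in> seq_span B"
proof -
  obtain c d where "f = (\<lambda>n. \<Sum>b\<in>B. c b * b n)" "g = (\<lambda>n. \<Sum>b\<in>B. d b * b n)"
    using assms unfolding seq_span_def by blast
  then show ?thesis unfolding seq_span_def
    by (intro CollectI exI[of _ "\<lambda>b. c b + d b"]) (simp add: sum.distrib algebra_simps)
qed

lemma seq_span_scale:
  assumes "f \<in> seq_span B"
  shows "(\<lambda>n. x * f n) \<in> seq_span B"
proof -
  obtain c where "f = (\<lambda>n. \<Sum>b\<in>B. c b * b n)"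
    using assms unfolding seq_span_def by blast
  then show ?thesis unfolding seq_span_def
    by (intro CollectI exI[of _ "\<lambda>b. x * c b"]) (simp add: sum_distrib_left algebra_simps)
qed

lemma seq_span_lincomb:
  assumes "finite B" "\<And>b. b \<in> B \<Longrightarrow> g b \<in> seq_span C"
  shows "(\<lambda>n. \<Sum>b\<in>B. c b * g b n) \<in> seq_span C"
proof -
  have "\<forall>b\<in>B. \<exists>d. g b = (\<lambda>n. \<Sum>b'\<in>C. d b' * b' n)"
    using assms(2) unfolding seq_span_def by blast
  then obtain d where d: "\<And>b. b \<in> B \<Longrightarrow> g b = (\<lambda>n. \<Sum>b'\<in>C. d b b' * b' n)"
    by (auto dest!: bchoice)
  have "(\<Sum>b\<in>B. c b * g b n) = (\<Sum>b'\<in>C. (\<Sum>b\<in>B. c b * d b b') * b' n)" for n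
    by (simp add: d sum_distrib_left sum_distrib_right sum.swap[of _ B] mult.assoc)
  then show ?thesis unfolding seq_span_def by (intro CollectI exI ext)
qed

lemma seq_span_decimation_closed:
  assumes "finite B" "\<And>b q. b \<in> B \<Longrightarrow> q < k \<Longrightarrow> (\<lambda>n. b (k * n + q)) \<in> seq_span B"
    and "f \<in> seq_span B" "q < k"
  shows "(\<lambda>n. f (k * n + q)) \<in> seq_span B"
proof -
  obtain c where "f = (\<lambda>n. \<Sum>b\<in>B. c b * b n)" using assms(3) unfolding seq_span_def by blast
  then show ?thesis
    using seq_span_lincomb[of B "\<lambda>b n. b (k * n + q)" B c] assms(1,2,4) by simp
qed

text \<open>Criterion for \<open>k\<close>-regularity: the whole \<open>k\<close>-kernel of \<open>a \<in> B\<close> lies in the span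
  of \<open>B\<close> once the span is closed under the \<open>k\<close> basic decimations
  (induction on the level \<open>j\<close>, writing \<open>r = k\<^sup>j q + r'\<close>).\<close>
lemma k_kernel_subset_seq_span:
  assumes "finite B" "a \<in> B" "\<And>b q. b \<in> B \<Longrightarrow> q < k \<Longrightarrow> (\<lambda>n. b (k * n + q)) \<in> seq_span B"
  shows "k_kernel k a \<subseteq> seq_span B"
proof -
  have "(\<lambda>n. a (k ^ j * n + r)) \<in> seq_span B" if "r < k ^ j" for j r
    using that
  proof (induction j arbitrary: r)
    case 0
    then show ?case using seq_span_base[OF assms(1,2)] by simp
  next
    case (Suc j)
    define q r' where "q = r div k ^ j" and "r' = r mod k ^ j"
    have "q < k" using Suc.prems by (simp add: q_def less_mult_imp_div_less mult.commute)
    have "k ^ j > 0" using Suc.prems by (cases "k = 0") auto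
    then have "r' < k ^ j" by (simp add: r'_def)
    then have "(\<lambda>n. a (k ^ j * n + r')) \<in> seq_span B" by (rule Suc.IH)
    from seq_span_decimation_closed[OF assms(1,3) this \<open>q < k\<close>]
    have "(\<lambda>n. a (k ^ j * (k * n + q) + r')) \<in> seq_span B" by simp
    moreover have "k ^ j * (k * n + q) + r' = k ^ Suc j * n + r" for n
      by (simp add: q_def r'_def algebra_simps)
    ultimately show ?case by simp
  qed
  then show ?thesis unfolding k_kernel_def by blast
qed

definition stern_deg_kernel_basis :: "(nat \<Rightarrow> 'a::field) set" where
  "stern_deg_kernel_basis =
     {\<lambda>n. of_nat (stern_deg n), \<lambda>n. of_nat (stern_deg (n + 1)), \<lambda>n. of_nat (stern_deg (2 * n + 1)),
      \<lambda>n. 1, \<lambda>n. if n = 0 then 1 else 0}"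

lemma stern_deg_kernel_basis_closed:
  assumes "b \<in> stern_deg_kernel_basis" "q < 2"
  shows "(\<lambda>n. b (2 * n + q)) \<in> seq_span (stern_deg_kernel_basis :: (nat \<Rightarrow> 'a::field) set)"
proof -
  define E :: "nat \<Rightarrow> 'a" where "E = (\<lambda>n. of_nat (stern_deg n))"
  define Delta :: "nat \<Rightarrow> 'a" where "Delta = (\<lambda>n. if n = 0 then 1 else 0)"
  let ?B = "stern_deg_kernel_basis :: (nat \<Rightarrow> 'a) set"
  have B: "?B = {E, \<lambda>n. E (n + 1), \<lambda>n. E (2 * n + 1), \<lambda>n. 1, Delta}"
    by (simp add: stern_deg_kernel_basis_def E_def Delta_def)
  have base: "E \<in> seq_span ?B" "(\<lambda>n. E (n + 1)) \<in> seq_span ?B" "(\<lambda>n. E (2 * n + 1)) \<in> seq_span ?B"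
      "(\<lambda>n. 1) \<in> seq_span ?B" "Delta \<in> seq_span ?B" "(\<lambda>n. 0) \<in> seq_span ?B"
    using seq_span_scale[of Delta ?B 0] by (auto intro: seq_span_base simp: B)
  text \<open>By \<open>e(2n) = e(4n+1) = e(n) + 1 - [n = 0]\<close> and \<open>e(2n+2) = e(4n+3) = e(n+1) + 1\<close>,
    every decimation of a basis sequence is one of the following two combinations,
    a basis sequence, or zero.\<close>
  have comb1: "(\<lambda>n. E n + (1 + (-1) * Delta n)) \<in> seq_span ?B"
    and comb2: "(\<lambda>n. E (n + 1) + 1) \<in> seq_span ?B"
    using base by (intro seq_span_add seq_span_scale; simp)+
  have "(\<lambda>n. E (2 * n)) = (\<lambda>n. E n + (1 + (-1) * Delta n))"
    by (rule ext, simp add: E_def Delta_def stern_deg_even)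
  moreover have "(\<lambda>n. E (2 * n + 1 + 1)) = (\<lambda>n. E (n + 1) + 1)"
  proof
    show "E (2 * n + 1 + 1) = E (n + 1) + 1" for n
      using stern_deg_even[of "n + 1"] by (simp add: E_def algebra_simps)
  qed
  moreover have "(\<lambda>n. E (2 * (2 * n) + 1)) = (\<lambda>n. E n + (1 + (-1) * Delta n))"
  proof
    show "E (2 * (2 * n) + 1) = E n + (1 + (-1) * Delta n)" for n
      using stern_deg_4m1[of n] by (cases "n = 0") (simp_all add: E_def Delta_def)
  qed
  moreover have "(\<lambda>n. E (2 * (2 * n + 1) + 1)) = (\<lambda>n. E (n + 1) + 1)"
    using stern_deg_4m3 by (simp add: E_def algebra_simps numeral_eq_Suc)
  moreover have "(\<lambda>n. Delta (2 * n)) = Delta" "(\<lambda>n. Delta (2 * n + 1)) = (\<lambda>n. 0)"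
    by (simp_all add: Delta_def)
  ultimately have "\<forall>b\<in>?B. (\<lambda>n. b (2 * n)) \<in> seq_span ?B \<and> (\<lambda>n. b (2 * n + 1)) \<in> seq_span ?B"
    using base comb1 comb2 unfolding B by simp
  then show ?thesis using assms less_2_cases[of q] by auto
qed

theorem stern_deg_2_regular: "k_regular 2 (\<lambda>n. of_nat (stern_deg n) :: 'a::field)"
  unfolding k_regular_iff_seq_span
proof (intro exI conjI)
  show "finite (stern_deg_kernel_basis :: (nat \<Rightarrow> 'a) set)"
    by (simp add: stern_deg_kernel_basis_def)
  moreover have "(\<lambda>n. of_nat (stern_deg n)) \<in> (stern_deg_kernel_basis :: (nat \<Rightarrow> 'a) set)"
    by (simp add: stern_deg_kernel_basis_def)
  ultimately show "k_kernel 2 (\<lambda>n. of_nat (stern_deg n))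
      \<subseteq> seq_span (stern_deg_kernel_basis :: (nat \<Rightarrow> 'a) set)"
    using stern_deg_kernel_basis_closed by (rule k_kernel_subset_seq_span)
qed

lemma fps_nth_E1: "fps_nth E1 = (\<lambda>n. of_nat (stern_deg n))"
  by (auto simp: E1_def)

section \<open>Functions satisfying no polynomial relation\<close>

lemma dominant_term_limit:
  fixes r :: "real poly" and g :: "real \<Rightarrow> real"
  assumes g_inf: "filterlim g at_top (at_right 0)"
    and g_slow: "\<And>j. ((\<lambda>s. s * g s ^ j) \<longlongrightarrow> 0) (at_right 0)"
    and vanish: "i > i0 \<Longrightarrow> poly r 0 = 0"
  shows "((\<lambda>s. poly r s * g s ^ i / g s ^ i0) \<longlongrightarrow> (if i = i0 then poly r 0 else 0)) (at_right 0)"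
proof -
  have g_pos: "eventually (\<lambda>s. g s > 0) (at_right 0)"
    using g_inf by (auto simp: filterlim_at_top_dense)
  have id0: "((\<lambda>s::real. s) \<longlongrightarrow> 0) (at_right 0)"
    by (rule tendsto_ident_at)
  show ?thesis
  proof (cases i i0 rule: linorder_cases)
    case less
    then obtain k where k: "k > 0" "i0 = i + k" by (metis less_imp_add_positive)
    have "eventually (\<lambda>s. poly r s * g s ^ i / g s ^ i0 = poly r s * inverse (g s ^ k)) (at_right 0)"
      using g_pos by eventually_elim (simp add: k power_add field_simps)
    moreover have "((\<lambda>s. poly r s * inverse (g s ^ k)) \<longlongrightarrow> poly r 0 * 0) (at_right 0)"
      by (intro tendsto_mult tendsto_poly id0 tendsto_inverse_0_at_top filterlim_pow_at_top k g_inf)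
    ultimately show ?thesis using less by (simp add: tendsto_cong)
  next
    case equal
    have "eventually (\<lambda>s. poly r s * g s ^ i / g s ^ i0 = poly r s) (at_right 0)"
      using g_pos by eventually_elim (simp add: equal)
    moreover have "((\<lambda>s. poly r s) \<longlongrightarrow> poly r 0) (at_right 0)"
      by (intro tendsto_poly id0)
    ultimately show ?thesis using equal by (simp add: tendsto_cong)
  next
    case greater
    then obtain k where k: "i = i0 + k" by (metis less_imp_add_positive)
    have "[:0, 1:] dvd r" using vanish greater poly_eq_0_iff_dvd[of r 0] by simp
    then obtain v where v: "r = [:0, 1:] * v" by (elim dvdE)
    have "eventually (\<lambda>s. poly r s * g s ^ i / g s ^ i0 = poly v s * (s * g s ^ k)) (at_right 0)"
      using g_pos by eventually_elim (simp add: v k power_add field_simps)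
    moreover have "((\<lambda>s. poly v s * (s * g s ^ k)) \<longlongrightarrow> poly v 0 * 0) (at_right 0)"
      by (intro tendsto_mult tendsto_poly id0 g_slow)
    ultimately show ?thesis using greater by (simp add: tendsto_cong)
  qed
qed

lemma dominant_term_not_eventually_zero:
  fixes r :: "nat \<Rightarrow> real poly" and g :: "real \<Rightarrow> real"
  assumes g_inf: "filterlim g at_top (at_right 0)"
    and g_slow: "\<And>j. ((\<lambda>s. s * g s ^ j) \<longlongrightarrow> 0) (at_right 0)"
    and i0: "i0 \<le> D" "poly (r i0) 0 \<noteq> 0"
    and vanish: "\<And>i. i0 < i \<Longrightarrow> i \<le> D \<Longrightarrow> poly (r i) 0 = 0"
  shows "\<not> eventually (\<lambda>s. (\<Sum>i\<le>D. poly (r i) s * g s ^ i) = 0) (at_right 0)"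
proof
  assume zero: "eventually (\<lambda>s. (\<Sum>i\<le>D. poly (r i) s * g s ^ i) = 0) (at_right 0)"
  define h where "h s = (\<Sum>i\<le>D. poly (r i) s * g s ^ i / g s ^ i0)" for s
  have "((\<lambda>s. poly (r i) s * g s ^ i / g s ^ i0) \<longlongrightarrow> (if i = i0 then poly (r i) 0 else 0))
      (at_right 0)" if "i \<le> D" for i
    using vanish that by (intro dominant_term_limit[OF g_inf g_slow]) auto
  then have "(h \<longlongrightarrow> (\<Sum>i\<le>D. if i = i0 then poly (r i) 0 else 0)) (at_right 0)"
    unfolding h_def by (intro tendsto_sum) simp
  then have "(h \<longlongrightarrow> poly (r i0) 0) (at_right 0)"
    using i0 by simp
  moreover have "eventually (\<lambda>s. h s = 0) (at_right 0)"
    using zero by eventually_elim (simp add: h_def sum_divide_distrib[symmetric])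
  then have "(h \<longlongrightarrow> 0) (at_right 0)"
    by (simp add: tendsto_cong)
  ultimately have "poly (r i0) 0 = 0"
    using tendsto_unique[OF trivial_limit_at_right_real] by blast
  with i0 show False by simp
qed

lemma not_eventually_zero_if_nonzero_at_0:
  fixes r :: "nat \<Rightarrow> real poly" and g :: "real \<Rightarrow> real"
  assumes g_inf: "filterlim g at_top (at_right 0)"
    and g_slow: "\<And>j. ((\<lambda>s. s * g s ^ j) \<longlongrightarrow> 0) (at_right 0)"
    and nonzero: "\<exists>i\<le>D. poly (r i) 0 \<noteq> 0"
  shows "\<not> eventually (\<lambda>s. (\<Sum>i\<le>D. poly (r i) s * g s ^ i) = 0) (at_right 0)"
proof -
  define S where "S = {i. i \<le> D \<and> poly (r i) 0 \<noteq> 0}"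
  have S: "finite S" "S \<noteq> {}" using nonzero by (auto simp: S_def)
  show ?thesis
  proof (rule dominant_term_not_eventually_zero[OF g_inf g_slow])
    show "Max S \<le> D" "poly (r (Max S)) 0 \<noteq> 0"
      using Max_in[OF S] by (auto simp: S_def)
    show "poly (r i) 0 = 0" if "Max S < i" "i \<le> D" for i
    proof (rule ccontr)
      assume "poly (r i) 0 \<noteq> 0"
      with that(2) have "i \<le> Max S" using Max_ge[OF S(1)] by (simp add: S_def)
      with that(1) show False by simp
    qed
  qed
qed

text \<open>General case: by induction on the total degree, cancel common factors \<open>s\<close>.\<close>
theorem not_eventually_zero_poly_combination:
  fixes r :: "nat \<Rightarrow> real poly" and g :: "real \<Rightarrow> real"
  assumes g_inf: "filterlim g at_top (at_right 0)"
    and g_slow: "\<And>j. ((\<lambda>s. s * g s ^ j) \<longlongrightarrow> 0) (at_right 0)"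
    and nonzero: "\<exists>i\<le>D. r i \<noteq> 0"
  shows "\<not> eventually (\<lambda>s. (\<Sum>i\<le>D. poly (r i) s * g s ^ i) = 0) (at_right 0)"
  using nonzero
proof (induction "\<Sum>i\<le>D. degree (r i)" arbitrary: r rule: less_induct)
  case less
  show ?case
  proof (cases "\<exists>i\<le>D. poly (r i) 0 \<noteq> 0")
    case True
    then show ?thesis by (rule not_eventually_zero_if_nonzero_at_0[OF g_inf g_slow])
  next
    case False
    define r' where "r' i = r i div [:0, 1:]" for i
    have r: "r i = [:0, 1:] * r' i" if "i \<le> D" for i
    proof -
      have "[:0, 1:] dvd r i" using False that poly_eq_0_iff_dvd[of "r i" 0] by simp
      then show ?thesis unfolding r'_def by (rule dvd_mult_div_cancel[symmetric])
    qed
    obtain i1 where i1: "i1 \<le> D" "r i1 \<noteq> 0" using less.prems by blast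
    have "degree (r' i) \<le> degree (r i)" if "i \<le> D" for i
      using r[OF that] by (cases "r' i = 0") (auto simp: degree_mult_eq)
    moreover have "degree (r' i1) < degree (r i1)"
      using r[OF i1(1)] i1(2) by (auto simp: degree_mult_eq)
    ultimately have smaller: "(\<Sum>i\<le>D. degree (r' i)) < (\<Sum>i\<le>D. degree (r i))"
      using i1(1) by (intro sum_strict_mono_ex1) auto
    have "\<exists>i\<le>D. r' i \<noteq> 0" using i1 r by force
    with smaller have IH: "\<not> eventually (\<lambda>s. (\<Sum>i\<le>D. poly (r' i) s * g s ^ i) = 0) (at_right 0)"
      by (rule less.hyps)
    show ?thesis
    proof
      assume "eventually (\<lambda>s. (\<Sum>i\<le>D. poly (r i) s * g s ^ i) = 0) (at_right 0)"
      with eventually_at_right_less[of "0::real"]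
      have "eventually (\<lambda>s. (\<Sum>i\<le>D. poly (r' i) s * g s ^ i) = 0) (at_right 0)"
      proof eventually_elim
        case (elim s)
        have "(\<Sum>i\<le>D. poly (r i) s * g s ^ i) = s * (\<Sum>i\<le>D. poly (r' i) s * g s ^ i)"
          by (simp add: sum_distrib_left r algebra_simps)
        with elim show ?case by simp
      qed
      with IH show False by contradiction
    qed
  qed
qed

section \<open>Polynomial expressions in power series\<close>

lemma poly_map_poly_as_sum:
  fixes h :: "'a::zero \<Rightarrow> 'b::comm_semiring_1"
  assumes "h 0 = 0"
  shows "poly (map_poly h Q) y = (\<Sum>i\<le>degree Q. h (coeff Q i) * y ^ i)"
proof -
  have "degree (map_poly h Q) \<le> degree Q"
    by (rule degree_le) (simp add: coeff_map_poly assms coeff_eq_0)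
  then have "poly (map_poly h Q) y = poly (\<Sum>i\<le>degree Q. monom (coeff (map_poly h Q) i) i) y"
    by (simp only: poly_as_sum_of_monoms')
  then show ?thesis by (simp add: poly_sum poly_monom coeff_map_poly assms)
qed

lemma eval_fps_poly_fps_of_poly:
  fixes F :: "'a::{banach, real_normed_field} fps" and Q :: "'a poly poly"
  assumes "ereal (norm z) < fps_conv_radius F"
  shows "ereal (norm z) < fps_conv_radius (poly (map_poly fps_of_poly Q) F) \<and>
    eval_fps (poly (map_poly fps_of_poly Q) F) z = poly (map_poly (\<lambda>p. poly p z) Q) (eval_fps F z)"
proof (induction Q)
  case (pCons p Q)
  let ?G = "poly (map_poly fps_of_poly Q) F"
  have "ereal (norm z) < min (fps_conv_radius F) (fps_conv_radius ?G)"
    using assms pCons.IH by simp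
  also have "\<dots> \<le> fps_conv_radius (F * ?G)" by (rule fps_conv_radius_mult)
  finally have FG: "ereal (norm z) < fps_conv_radius (F * ?G)" .
  have "ereal (norm z) < min (fps_conv_radius (fps_of_poly p)) (fps_conv_radius (F * ?G))"
    using FG by simp
  also have "\<dots> \<le> fps_conv_radius (fps_of_poly p + F * ?G)" by (rule fps_conv_radius_add)
  finally show ?case
    using assms pCons.IH FG by (simp add: map_poly_pCons eval_fps_add eval_fps_mult)
qed simp

definition fps_of_rat :: "rat fps \<Rightarrow> real fps" where
  "fps_of_rat f = Abs_fps (\<lambda>n. of_rat (fps_nth f n))"

lemma fps_of_rat_0 [simp]: "fps_of_rat 0 = 0"
  by (rule fps_ext) (simp add: fps_of_rat_def)

lemma fps_of_rat_of_nat: "fps_of_rat (Abs_fps (\<lambda>n. of_nat (c n))) = Abs_fps (\<lambda>n. of_nat (c n))"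
  by (rule fps_ext) (simp add: fps_of_rat_def)

lemma fps_of_rat_add: "fps_of_rat (f + g) = fps_of_rat f + fps_of_rat g"
  by (rule fps_ext) (simp add: fps_of_rat_def of_rat_add)

lemma fps_of_rat_mult: "fps_of_rat (f * g) = fps_of_rat f * fps_of_rat g"
  by (rule fps_ext) (simp add: fps_of_rat_def fps_mult_nth of_rat_sum of_rat_mult)

lemma fps_of_rat_fps_of_poly: "fps_of_rat (fps_of_poly p) = fps_of_poly (map_poly of_rat p)"
  by (rule fps_ext) (simp add: fps_of_rat_def coeff_map_poly)

lemma fps_of_rat_poly:
  "fps_of_rat (poly (map_poly fps_of_poly P) F) =
     poly (map_poly fps_of_poly (map_poly (map_poly of_rat) P)) (fps_of_rat F)"
  by (induction P) (simp_all add: map_poly_pCons fps_of_rat_add fps_of_rat_mult fps_of_rat_fps_of_poly)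

text \<open>Substituting \<open>x = 1 - s\<close>, \<open>y = g / s\<close> into \<open>Q(x, y)\<close> and clearing denominators.\<close>
lemma homogenize_at_one_minus:
  fixes Q :: "real poly poly"
  defines "r \<equiv> \<lambda>i. pcompose (coeff Q i) [:1, -1:] * monom 1 (degree Q - i)"
  shows "(\<Sum>i\<le>degree Q. poly (r i) s * (s * y) ^ i) =
    s ^ degree Q * poly (map_poly (\<lambda>p. poly p (1 - s)) Q) y"
proof -
  have summand: "poly (r i) s * (s * y) ^ i = s ^ degree Q * (poly (coeff Q i) (1 - s) * y ^ i)"
    if "i \<le> degree Q" for i
  proof -
    have "s ^ (degree Q - i) * s ^ i = s ^ degree Q"
      using that by (simp flip: power_add)
    then show ?thesis
      by (simp add: r_def poly_pcompose poly_monom power_mult_distrib mult_ac)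
  qed
  then have "(\<Sum>i\<le>degree Q. poly (r i) s * (s * y) ^ i) =
      (\<Sum>i\<le>degree Q. s ^ degree Q * (poly (coeff Q i) (1 - s) * y ^ i))"
    by (intro sum.cong) simp_all
  also have "\<dots> = s ^ degree Q * poly (map_poly (\<lambda>p. poly p (1 - s)) Q) y"
    by (simp add: poly_map_poly_as_sum sum_distrib_left)
  finally show ?thesis .
qed

section \<open>Power series with logarithmically growing coefficients\<close>

text \<open>The real function \<open>\<Sum>\<^sub>n c(n) x\<^sup>n\<close>; it converges on \<open>[0, 1)\<close> for the sequences below.\<close>
definition nat_series :: "(nat \<Rightarrow> nat) \<Rightarrow> real \<Rightarrow> real" where
  "nat_series c x = (\<Sum>n. real (c n) * x ^ n)"

text \<open>If \<open>2\<^sup>m \<le> n + 1\<close>, then \<open>m \<le> J + (n + 1) / 2\<^sup>J\<close> for every \<open>J\<close>; this lets us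
  split the series into a bounded part and a small multiple of \<open>\<Sum> (n + 1) x\<^sup>n\<close>.\<close>
lemma le_by_binary_exponent:
  assumes "2 ^ m \<le> n + 1"
  shows "real m \<le> real J + (real n + 1) / 2 ^ J"
proof (cases "m \<le> J")
  case True
  then show ?thesis by (simp add: add_increasing2)
next
  case False
  then obtain k where k: "m = J + k" by (metis le_add_diff_inverse nat_le_linear)
  have "(2::real) ^ J * 2 ^ k \<le> real n + 1"
    using assms by (simp add: k power_add flip: of_nat_le_iff[where 'a = real])
  then have "(2::real) ^ k \<le> (real n + 1) / 2 ^ J" by (simp add: field_simps)
  moreover have "real k < 2 ^ k"
    using less_exp[of k] by (metis of_nat_less_iff of_nat_numeral of_nat_power)
  ultimately have "real k \<le> (real n + 1) / 2 ^ J" by linarith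
  then show ?thesis using k by simp
qed

context
  fixes c :: "nat \<Rightarrow> nat"
  assumes log_growth: "\<And>n. 2 ^ c n \<le> n + 1"
begin

lemma nat_series_summable:
  assumes "0 \<le> x" "x < 1"
  shows "summable (\<lambda>n. real (c n) * x ^ n)"
proof (rule summable_comparison_test)
  show "\<exists>N. \<forall>n\<ge>N. norm (real (c n) * x ^ n) \<le> real (Suc n) * x ^ n"
  proof (intro exI allI impI)
    fix n
    have "real (c n) \<le> real (Suc n)" using le_by_binary_exponent[OF log_growth, of n 0] by simp
    then show "norm (real (c n) * x ^ n) \<le> real (Suc n) * x ^ n"
      using assms by (simp add: mult_right_mono)
  qed
  show "summable (\<lambda>n. real (Suc n) * x ^ n)"
    using geometric_deriv_sums[of x] assms by (simp add: sums_summable)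
qed

text \<open>Choosing \<open>J \<approx> log\<^sub>2 (1 / (1 - x))\<close> later gives a logarithmic bound near \<open>x = 1\<close>.\<close>
lemma nat_series_upper:
  assumes "0 \<le> x" "x < 1"
  shows "nat_series c x \<le> real J / (1 - x) + 1 / (2 ^ J * (1 - x) ^ 2)"
proof -
  have bound: "(\<lambda>n. real J * x ^ n + (1 / 2 ^ J) * (real (Suc n) * x ^ n)) sums
                 (real J * (1 / (1 - x)) + (1 / 2 ^ J) * (1 / (1 - x) ^ 2))"
    using assms by (intro sums_add sums_mult geometric_deriv_sums geometric_sums) auto
  have "nat_series c x \<le> (\<Sum>n. real J * x ^ n + (1 / 2 ^ J) * (real (Suc n) * x ^ n))"
    unfolding nat_series_def
  proof (rule suminf_le)
    fix n
    have "real (c n) * x ^ n \<le> (real J + (real n + 1) / 2 ^ J) * x ^ n"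
      using le_by_binary_exponent[OF log_growth] assms by (intro mult_right_mono) auto
    then show "real (c n) * x ^ n \<le> real J * x ^ n + (1 / 2 ^ J) * (real (Suc n) * x ^ n)"
      by (simp add: algebra_simps add_divide_distrib)
  qed (use nat_series_summable[OF assms] sums_summable[OF bound] in auto)
  then show ?thesis using sums_unique[OF bound] by (simp add: field_simps)
qed

lemma nat_series_lower:
  assumes "0 \<le> x" "x < 1" and large: "\<And>n. n \<ge> N \<Longrightarrow> real (c n) \<ge> M" and "M \<ge> 0"
  shows "nat_series c x \<ge> M / (1 - x) - M * real N"
proof -
  have "(\<lambda>n. if n < N then M else 0) sums (\<Sum>n<N. if n < N then M else 0)"
    by (rule sums_finite) auto
  then have "(\<lambda>n. if n < N then M else 0) sums (M * real N)"
    by (simp add: mult.commute)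
  then have bound: "(\<lambda>n. M * x ^ n - (if n < N then M else 0)) sums (M * (1 / (1 - x)) - M * real N)"
    using assms by (intro sums_diff sums_mult geometric_sums) auto
  have "(\<Sum>n. M * x ^ n - (if n < N then M else 0)) \<le> nat_series c x"
    unfolding nat_series_def
  proof (rule suminf_le)
    fix n
    show "M * x ^ n - (if n < N then M else 0) \<le> real (c n) * x ^ n"
    proof (cases "n < N")
      case True
      have "M * x ^ n \<le> M" using assms by (simp add: mult_left_le power_le_one)
      moreover have "0 \<le> real (c n) * x ^ n" using assms by simp
      ultimately show ?thesis using True by simp
    next
      case False
      then show ?thesis using large[of n] assms by (auto intro!: mult_right_mono)
    qed
  qed (use nat_series_summable[OF assms(1,2)] sums_summable[OF bound] in auto)
  then show ?thesis using sums_unique[OF bound] by simp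
qed

lemma nat_series_nonneg: "0 \<le> x \<Longrightarrow> x < 1 \<Longrightarrow> nat_series c x \<ge> 0"
  unfolding nat_series_def using nat_series_summable by (intro suminf_nonneg) auto

lemma rescaled_nat_series_bounds:
  assumes "0 < s" "s < 1"
  shows "0 \<le> s * nat_series c (1 - s)" "s * nat_series c (1 - s) \<le> log 2 (1 / s) + 2"
proof -
  show "0 \<le> s * nat_series c (1 - s)" using assms nat_series_nonneg[of "1 - s"] by simp
  define J where "J = nat \<lceil>log 2 (1 / s)\<rceil>"
  have log_nonneg: "log 2 (1 / s) \<ge> 0" using assms by simp
  then have J: "real J \<ge> log 2 (1 / s)" "real J \<le> log 2 (1 / s) + 1"
    unfolding J_def by linarith+
  have "1 / s = 2 powr log 2 (1 / s)" using assms by simp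
  also have "\<dots> \<le> 2 powr real J" using J by (intro powr_mono) auto
  also have "\<dots> = 2 ^ J" by (simp add: powr_realpow)
  finally have "2 ^ J * s \<ge> 1" using assms by (simp add: field_simps)
  have "s * nat_series c (1 - s) \<le> s * (real J / s + 1 / (2 ^ J * s ^ 2))"
    using nat_series_upper[of "1 - s" J] assms by (intro mult_left_mono) auto
  also have "\<dots> = real J + 1 / (2 ^ J * s)" using assms by (simp add: field_simps power2_eq_square)
  also have "1 / (2 ^ J * s) \<le> 1" using \<open>2 ^ J * s \<ge> 1\<close> by simp
  finally show "s * nat_series c (1 - s) \<le> log 2 (1 / s) + 2" using J by linarith
qed

lemma rescaled_nat_series_slow: "((\<lambda>s. s * (s * nat_series c (1 - s)) ^ j) \<longlongrightarrow> 0) (at_right 0)"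
proof (rule tendsto_sandwich[of "\<lambda>_. 0" _ _ "\<lambda>s. s * (log 2 (1 / s) + 2) ^ j"])
  have unit: "eventually (\<lambda>s::real. 0 < s \<and> s < 1) (at_right 0)"
    unfolding eventually_at_right_field by (intro exI[of _ 1]) auto
  show "eventually (\<lambda>s. 0 \<le> s * (s * nat_series c (1 - s)) ^ j) (at_right 0)"
    using unit by eventually_elim (use rescaled_nat_series_bounds in auto)
  show "eventually (\<lambda>s. s * (s * nat_series c (1 - s)) ^ j \<le> s * (log 2 (1 / s) + 2) ^ j) (at_right 0)"
    using unit
    by eventually_elim (use rescaled_nat_series_bounds in \<open>auto intro!: mult_left_mono power_mono\<close>)
  show "((\<lambda>s. s * (log 2 (1 / s) + 2) ^ j) \<longlongrightarrow> 0) (at_right 0)"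
    by real_asymp
qed simp

lemma rescaled_nat_series_tendsto_infinity:
  assumes unbounded: "filterlim c at_top sequentially"
  shows "filterlim (\<lambda>s. s * nat_series c (1 - s)) at_top (at_right 0)"
  unfolding filterlim_at_top_dense
proof
  fix Z :: real
  define M :: nat where "M = nat \<lceil>Z\<rceil> + 1"
  have "Z < real M" unfolding M_def by linarith
  obtain N where N: "\<And>n. n \<ge> N \<Longrightarrow> c n \<ge> M"
    using unbounded unfolding filterlim_at_top eventually_sequentially by blast
  have "((\<lambda>s. M - M * real N * s) \<longlongrightarrow> M - M * real N * 0) (at_right 0)"
    by (intro tendsto_intros)
  then have "eventually (\<lambda>s. Z < M - M * real N * s) (at_right 0)"
    using \<open>Z < real M\<close> by (intro order_tendstoD(1)) auto
  moreover have "eventually (\<lambda>s::real. 0 < s \<and> s < 1) (at_right 0)"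
    unfolding eventually_at_right_field by (intro exI[of _ 1]) auto
  ultimately show "eventually (\<lambda>s. Z < s * nat_series c (1 - s)) (at_right 0)"
  proof eventually_elim
    case (elim s)
    have "nat_series c (1 - s) \<ge> M / (1 - (1 - s)) - M * real N"
      using elim N by (intro nat_series_lower) auto
    then have "s * nat_series c (1 - s) \<ge> s * (M / s - M * real N)"
      using elim by (intro mult_left_mono) auto
    also have "s * (M / s - M * real N) = M - M * real N * s"
      using elim by (simp add: field_simps)
    finally show ?case using elim by simp
  qed
qed


lemma nat_series_root_on_unit:
  fixes P :: "rat poly poly"
  assumes root: "poly (map_poly fps_of_poly P) (Abs_fps (\<lambda>n. of_nat (c n))) = 0"
    and x: "0 < x" "x < 1"
  shows "poly (map_poly (\<lambda>p. poly p x) (map_poly (map_poly of_rat) P)) (nat_series c x) = 0"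
proof -
  define F where "F = Abs_fps (\<lambda>n. real (c n))"
  have "poly (map_poly fps_of_poly (map_poly (map_poly of_rat) P)) F =
      fps_of_rat (poly (map_poly fps_of_poly P) (Abs_fps (\<lambda>n. of_nat (c n))))"
    by (simp add: fps_of_rat_poly fps_of_rat_of_nat F_def)
  then have F_root: "poly (map_poly fps_of_poly (map_poly (map_poly of_rat) P)) F = 0"
    using root by simp
  have "ereal (norm x) < 1" using x by simp
  also have "1 \<le> fps_conv_radius F"
    unfolding fps_conv_radius_def F_def
    using nat_series_summable by (intro conv_radius_geI_ex') simp
  finally have "ereal (norm x) < fps_conv_radius F" .
  from eval_fps_poly_fps_of_poly[OF this, of "map_poly (map_poly of_rat) P"] F_root show ?thesis
    by (simp add: F_def eval_fps_def nat_series_def)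
qed

theorem log_growth_series_transcendental:
  assumes unbounded: "filterlim c at_top sequentially"
  shows "\<not> fps_algebraic_ratfun (Abs_fps (\<lambda>n. of_nat (c n)))"
proof
  assume "fps_algebraic_ratfun (Abs_fps (\<lambda>n. of_nat (c n)))"
  then obtain P :: "rat poly poly"
    where P: "P \<noteq> 0" "poly (map_poly fps_of_poly P) (Abs_fps (\<lambda>n. of_nat (c n))) = 0"
    unfolding fps_algebraic_ratfun_def by blast
  define Q :: "real poly poly" where "Q = map_poly (map_poly of_rat) P"
  define r where "r i = pcompose (coeff Q i) [:1, -1:] * monom 1 (degree Q - i)" for i
  have "eventually (\<lambda>s. (\<Sum>i\<le>degree Q. poly (r i) s * (s * nat_series c (1 - s)) ^ i) = 0)
      (at_right 0)"
  proof -
    have "eventually (\<lambda>s::real. 0 < s \<and> s < 1) (at_right 0)"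
      unfolding eventually_at_right_field by (intro exI[of _ 1]) auto
    then show ?thesis
    proof eventually_elim
      case (elim s)
      then show ?case
        using homogenize_at_one_minus[of Q s "nat_series c (1 - s)"]
          nat_series_root_on_unit[OF P(2), of "1 - s"]
        by (simp add: r_def Q_def)
    qed
  qed
  moreover have "r (degree Q) \<noteq> 0"
    using P(1) by (simp add: r_def Q_def map_poly_eq_0_iff pcompose_eq_0_iff)
  ultimately show False
    using not_eventually_zero_poly_combination[OF rescaled_nat_series_tendsto_infinity[OF unbounded]
        rescaled_nat_series_slow, of "degree Q" r] by blast
qed

end

theorem mainTheorem18:
  shows "k_regular_fps 2 E1 \<and> \<not> fps_algebraic_ratfun E1"
proof
  show "k_regular_fps 2 E1"
    unfolding k_regular_fps_def fps_nth_E1 by (rule stern_deg_2_regular)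
  have "E1 = Abs_fps (\<lambda>n. of_nat (stern_deg n))"
    by (rule fps_ext) (simp add: fps_nth_E1)
  then show "\<not> fps_algebraic_ratfun E1"
    using log_growth_series_transcendental[OF stern_deg_exp_le stern_deg_tendsto_infinity] by simp
qed

end
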